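(* For any integer $m\ge1$ there exists $\varepsilon>0$ small enough such that on $I(m,\varepsilon)$, with $f_1,f_2,f_3$ the first three eigenfunctions of the Laplacian: (a) the first three eigenvalues are simple; (b) $f_2\circ\psi=-f_2$ and $N(f_2)=m$; (c) $f_3\circ\psi=f_3$ and $N(f_3)=2$.
   Context: $I(m,\varepsilon)$ is the metric graph with vertices $v_1,v_2,v_3,v_4$, an edge $e_1$ of length $1/2$ from $v_1$ to $v_2$, an edge $e_2$ of length $1/2$ from $v_3$ to $v_4$, and $m$ parallel edges of length $\varepsilon$ joining $v_2$ and $v_3$. The Laplacian $-\frac{d^2}{dx^2}$ acts edgewise with Dirichlet conditions at $v_1,v_4$ and Neumann–Kirchhoff conditions (continuity and vanishing sum of outgoing derivatives) at $v_2,v_3$; eigenvalues are ordered increasingly with multiplicity, with $L^2$-orthogonal eigenfunctions $f_1,f_2,\dots$. $\psi:I(m,\varepsilon)\to I(m,\varepsilon)$ is the reflection symmetry exchanging $v_1\leftrightarrow v_4$, $v_2\leftrightarrow v_3$, mapping $e_1$ isometrically onto $e_2$ and each small edge onto itself with orientation reversed. $N(f)$ is the number of zeroes of $f$ other than at $v_1,v_4$. *)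

theory Defs
  imports "HOL-Analysis.Analysis"
begin

text \<open>E1 x : point of e1 at distance x from v1 (x in [0,1/2]); E1 0 = v1, E1 (1/2) = v2.
  E2 x : point of e2 at distance x from v3 (x in [0,1/2]); E2 0 = v3, E2 (1/2) = v4.
  Sm j x : interior point of the j-th small edge (j < m) at distance x from v2 (x in (0,eps)).\<close>

datatype gpoint = E1 real | E2 real | Sm nat real

definition gpoints :: "nat \<Rightarrow> real \<Rightarrow> gpoint set" where
  "gpoints m eps =
     {E1 x | x. 0 \<le> x \<and> x \<le> 1/2} \<union> {E2 x | x. 0 \<le> x \<and> x \<le> 1/2}
     \<union> {Sm j x | j x. j < m \<and> 0 < x \<and> x < eps}"

text \<open>Edge functions of a function on the graph (small edge j oriented from v2 to v3).\<close>
definition edge1 :: "(gpoint \<Rightarrow> real) \<Rightarrow> real \<Rightarrow> real" where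
  "edge1 f x = f (E1 x)"

definition edge2 :: "(gpoint \<Rightarrow> real) \<Rightarrow> real \<Rightarrow> real" where
  "edge2 f x = f (E2 x)"

definition sedge :: "real \<Rightarrow> (gpoint \<Rightarrow> real) \<Rightarrow> nat \<Rightarrow> real \<Rightarrow> real" where
  "sedge eps f j x = (if x \<le> 0 then f (E1 (1/2)) else if eps \<le> x then f (E2 0) else f (Sm j x))"

definition edge_eq :: "real \<Rightarrow> real \<Rightarrow> (real \<Rightarrow> real) \<Rightarrow> (real \<Rightarrow> real) \<Rightarrow> bool" where
  "edge_eq L lam u u' \<longleftrightarrow>
     (\<forall>x\<in>{0..L}. (u has_real_derivative u' x) (at x within {0..L})) \<and>
     (\<forall>x\<in>{0..L}. (u' has_real_derivative (- lam * u x)) (at x within {0..L}))"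

text \<open>Eigenfunction of the Laplacian -d^2/dx^2 on I(m,eps) with Dirichlet conditions at v1, v4
  and Neumann--Kirchhoff conditions at v2, v3 (continuity at v2, v3 is encoded by the
  differentiability of the extended small-edge functions on the closed edges).\<close>
definition eigenfun :: "nat \<Rightarrow> real \<Rightarrow> real \<Rightarrow> (gpoint \<Rightarrow> real) \<Rightarrow> bool" where
  "eigenfun m eps lam f \<longleftrightarrow>
     (\<exists>p\<in>gpoints m eps. f p \<noteq> 0) \<and>
     f (E1 0) = 0 \<and> f (E2 (1/2)) = 0 \<and>
     (\<exists>d1 d2 ds.
        edge_eq (1/2) lam (edge1 f) d1 \<and>
        edge_eq (1/2) lam (edge2 f) d2 \<and>
        (\<forall>j<m. edge_eq eps lam (sedge eps f j) (ds j)) \<and>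
        - d1 (1/2) + (\<Sum>j<m. ds j 0) = 0 \<and>
        (\<Sum>j<m. - ds j eps) + d2 0 = 0)"

definition eigenval :: "nat \<Rightarrow> real \<Rightarrow> real \<Rightarrow> bool" where
  "eigenval m eps lam \<longleftrightarrow> (\<exists>f. eigenfun m eps lam f)"

definition simple_eigenval :: "nat \<Rightarrow> real \<Rightarrow> real \<Rightarrow> bool" where
  "simple_eigenval m eps lam \<longleftrightarrow> eigenval m eps lam \<and>
     (\<forall>f g. eigenfun m eps lam f \<and> eigenfun m eps lam g \<longrightarrow>
        (\<exists>c. \<forall>p\<in>gpoints m eps. f p = c * g p))"

fun psi :: "real \<Rightarrow> gpoint \<Rightarrow> gpoint" where
  "psi eps (E1 x) = E2 (1/2 - x)"
| "psi eps (E2 x) = E1 (1/2 - x)"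
| "psi eps (Sm j x) = Sm j (eps - x)"

text \<open>N(f): zeros of f other than at v1 = E1 0 and v4 = E2 (1/2).\<close>
definition zero_set :: "nat \<Rightarrow> real \<Rightarrow> (gpoint \<Rightarrow> real) \<Rightarrow> gpoint set" where
  "zero_set m eps f = {p \<in> gpoints m eps - {E1 0, E2 (1/2)}. f p = 0}"

end

theory Submission
  imports Defs
begin

(* On every edge an eigenfunction solves -u'' = lam u, so it is a combination of the
   fundamental solutions cosl lam and sinl lam.  Shoot from v1 with slope 1.  When
   sinl lam eps ~= 0, the values at v2 and v3 determine the solution on each small edge,
   so all m small edges carry the same function, and with the Kirchhoff conditions every
   eigenfunction is a multiple of one explicit shooting function; lam is an eigenvalue
   iff this function vanishes at v4.  For lam <= 0 its value at v4 is positive.  For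
   lam = (2b)^2 that value is a positive multiple of sym_char b * antisym_char b, and the
   shooting function is psi-symmetric at zeros of sym_char and psi-antisymmetric at zeros
   of antisym_char.  For eps <= 1/4 the product has exactly one root on (0, 3 pi/2] in
   each of (0, pi/2), (pi/2, pi) and (pi, 3 pi/2), a root of sym_char, antisym_char and
   sym_char respectively.  The closed forms then locate the zeros: the second
   eigenfunction vanishes exactly at the midpoints of the small edges, the third once on
   each long edge. *)

section \<open>Solutions of -u'' = lam u on an interval\<close>

(* The solutions with initial values u 0 = 1, u' 0 = 0 and u 0 = 0, u' 0 = 1. *)
definition cosl :: "real \<Rightarrow> real \<Rightarrow> real" where
  "cosl lam x =
     (if 0 < lam then cos (sqrt lam * x) else if lam < 0 then cosh (sqrt (- lam) * x) else 1)"

definition sinl :: "real \<Rightarrow> real \<Rightarrow> real" where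
  "sinl lam x =
     (if 0 < lam then sin (sqrt lam * x) / sqrt lam
      else if lam < 0 then sinh (sqrt (- lam) * x) / sqrt (- lam) else x)"

lemma cosl_0 [simp]: "cosl lam 0 = 1"
  by (simp add: cosl_def)

lemma sinl_0 [simp]: "sinl lam 0 = 0"
  by (simp add: sinl_def)

lemma sinl_square: "0 < k \<Longrightarrow> sinl (k^2) x = sin (k * x) / k"
  by (simp add: sinl_def)

lemma cosl_square: "0 < k \<Longrightarrow> cosl (k^2) x = cos (k * x)"
  by (simp add: cosl_def)

lemma sinl_neg_square: "0 < k \<Longrightarrow> sinl (- (k^2)) x = sinh (k * x) / k"
  by (simp add: sinl_def)

lemma cosl_neg_square: "0 < k \<Longrightarrow> cosl (- (k^2)) x = cosh (k * x)"
  by (simp add: cosl_def)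

lemma real_cases_square:
  fixes lam :: real
  obtains k where "0 < k" "lam = k^2" | "lam = 0" | k where "0 < k" "lam = - (k^2)"
proof (cases lam "0 :: real" rule: linorder_cases)
  case less
  then show ?thesis
    using that(3)[of "sqrt (- lam)"] by simp
next
  case greater
  then show ?thesis
    using that(1)[of "sqrt lam"] by simp
qed (use that in simp)

lemma DERIV_sinl: "(sinl lam has_real_derivative cosl lam x) (at x)"
proof (cases lam rule: real_cases_square)
  case (1 k)
  then have "sinl lam = (\<lambda>x. sin (k * x) / k)"
    by (simp add: fun_eq_iff sinl_square)
  then show ?thesis
    using 1 by (auto intro!: derivative_eq_intros simp: cosl_square)
next
  case (3 k)
  then have "sinl lam = (\<lambda>x. sinh (k * x) / k)"
    by (simp add: fun_eq_iff sinl_neg_square)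
  then show ?thesis
    using 3 by (auto intro!: derivative_eq_intros simp: cosl_neg_square)
qed (auto intro!: derivative_eq_intros simp: sinl_def[abs_def] cosl_def)

lemma DERIV_cosl: "(cosl lam has_real_derivative - lam * sinl lam x) (at x)"
proof (cases lam rule: real_cases_square)
  case (1 k)
  then have "cosl lam = (\<lambda>x. cos (k * x))" "sinl lam x = sin (k * x) / k"
    by (simp_all add: fun_eq_iff cosl_square sinl_square)
  then show ?thesis
    using 1 by (auto intro!: derivative_eq_intros simp: power2_eq_square)
next
  case (3 k)
  then have "cosl lam = (\<lambda>x. cosh (k * x))" "sinl lam x = sinh (k * x) / k"
    by (simp_all add: fun_eq_iff cosl_neg_square sinl_neg_square)
  then show ?thesis
    using 3 by (auto intro!: derivative_eq_intros simp: power2_eq_square)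
qed (auto intro!: derivative_eq_intros simp: sinl_def cosl_def[abs_def])

declare DERIV_sinl[THEN DERIV_chain2, derivative_intros]
  and DERIV_cosl[THEN DERIV_chain2, derivative_intros]

lemma sinl_pos:
  assumes "0 < x" "lam \<le> 0 \<or> sqrt lam * x < pi"
  shows "0 < sinl lam x"
  using assms by (auto simp: sinl_def intro!: divide_pos_pos sin_gt_zero)

lemma cosl_pos: "lam \<le> 0 \<Longrightarrow> 0 < cosl lam x"
  by (simp add: cosl_def)

lemma edge_eq_cosl_sinl:
  "edge_eq L lam (\<lambda>x. a * cosl lam x + b * sinl lam x)
     (\<lambda>x. - a * lam * sinl lam x + b * cosl lam x)"
  unfolding edge_eq_def by (auto intro!: derivative_eq_intros simp: algebra_simps)

lemma edge_eq_cosl_sinl_reflect: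
  "edge_eq L lam (\<lambda>x. a * cosl lam (L - x) + b * sinl lam (L - x))
     (\<lambda>x. a * lam * sinl lam (L - x) - b * cosl lam (L - x))"
  unfolding edge_eq_def by (auto intro!: derivative_eq_intros simp: algebra_simps)

lemma edge_eq_cong:
  assumes "\<And>x. x \<in> {0..L} \<Longrightarrow> u x = v x" and "edge_eq L lam u u'"
  shows "edge_eq L lam v u'"
  using assms unfolding edge_eq_def has_field_derivative_def
  by (auto intro: has_derivative_transform[where f = u])

lemma mult_le_abs_sum_squares:
  fixes r a b :: real
  shows "2 * r * a * b \<le> \<bar>r\<bar> * (a^2 + b^2)"
proof -
  have "2 * \<bar>a\<bar> * \<bar>b\<bar> \<le> a^2 + b^2"
    using sum_squares_bound[of "\<bar>a\<bar>" "\<bar>b\<bar>"] by simp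
  then have "\<bar>r\<bar> * (2 * \<bar>a\<bar> * \<bar>b\<bar>) \<le> \<bar>r\<bar> * (a^2 + b^2)"
    by (simp add: mult_left_mono)
  moreover have "\<bar>r\<bar> * (2 * \<bar>a\<bar> * \<bar>b\<bar>) = \<bar>2 * r * a * b\<bar>"
    by (simp add: abs_mult)
  ultimately show ?thesis
    by linarith
qed

lemma edge_eq_unique:
  assumes u: "edge_eq L lam u u'" and v: "edge_eq L lam v v'"
    and init: "u 0 = v 0" "u' 0 = v' 0" and x: "x \<in> {0..L}"
  shows "u x = v x \<and> u' x = v' x"
proof -
  define w where "w t = u t - v t" for t
  define w' where "w' t = u' t - v' t" for t
  define c where "c = \<bar>1 - lam\<bar>"
  (* Energy estimate: w^2 + w'^2 has derivative 2 (1 - lam) w w' <= c (w^2 + w'^2). *)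
  define G where "G t = (w t ^ 2 + w' t ^ 2) * exp (- c * t)" for t
  define G' where
    "G' t = (2 * (1 - lam) * w t * w' t - c * (w t ^ 2 + w' t ^ 2)) * exp (- c * t)" for t
  have dw: "(w has_real_derivative w' t) (at t within {0..L})"
    and dw': "(w' has_real_derivative - lam * w t) (at t within {0..L})" if "t \<in> {0..L}" for t
    using u v that unfolding edge_eq_def w_def[abs_def] w'_def[abs_def]
    by (auto intro!: derivative_eq_intros simp: algebra_simps)
  have dG: "(G has_derivative (*) (G' t)) (at t within {0..x})" if "0 \<le> t" "t \<le> x" for t
  proof -
    have t: "t \<in> {0..L}"
      using that x by auto
    have "(G has_real_derivative G' t) (at t within {0..L})"
      unfolding G_def[abs_def] G'_def
      by (rule derivative_eq_intros dw[OF t] dw'[OF t] refl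
          | simp add: algebra_simps power2_eq_square)+
    then show ?thesis
      using x by (auto simp: has_field_derivative_def intro: has_derivative_subset)
  qed
  have "G' t \<le> 0" for t
    using mult_le_abs_sum_squares[of "1 - lam" "w t" "w' t"]
    by (simp add: G'_def c_def mult_nonpos_nonneg)
  moreover obtain t where "G x - G 0 = G' t * (x - 0)"
    using mvt_very_simple[of 0 x G "\<lambda>t. (*) (G' t)"] dG x by auto
  ultimately have "G x \<le> 0"
    using x init by (simp add: G_def w_def w'_def mult_nonpos_nonneg)
  then have "w x ^ 2 + w' x ^ 2 \<le> 0"
    unfolding G_def by (simp add: mult_le_0_iff)
  then show ?thesis
    unfolding sum_power2_le_zero_iff w_def w'_def by simp
qed

lemma edge_eq_solution:
  assumes "edge_eq L lam u u'" "x \<in> {0..L}"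
  shows "u x = u 0 * cosl lam x + u' 0 * sinl lam x"
    and "u' x = - u 0 * lam * sinl lam x + u' 0 * cosl lam x"
  using edge_eq_unique[OF assms(1) edge_eq_cosl_sinl _ _ assms(2)] by simp_all

lemma edge_eq_initial_slope:
  assumes "edge_eq L lam u u'" "0 \<le> L" "sinl lam L \<noteq> 0"
  shows "u' 0 = (u L - u 0 * cosl lam L) / sinl lam L"
  using edge_eq_solution(1)[OF assms(1), of L] assms(2,3) by (simp add: field_simps)

section \<open>The shooting function\<close>

lemma gpoints_cases:
  assumes "p \<in> gpoints m eps"
  obtains x where "p = E1 x" "x \<in> {0..1/2}"
  | x where "p = E2 x" "x \<in> {0..1/2}"
  | j y where "p = Sm j y" "j < m" "0 < y" "y < eps"
  using assms unfolding gpoints_def by auto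

lemma psi_gpoints: "p \<in> gpoints m eps \<Longrightarrow> psi eps p \<in> gpoints m eps"
  by (erule gpoints_cases) (auto simp: gpoints_def)

lemma sedge_eq: "0 < y \<Longrightarrow> y < eps \<Longrightarrow> sedge eps f j y = f (Sm j y)"
  and sedge_0 [simp]: "sedge eps f j 0 = f (E1 (1/2))"
  and sedge_eps [simp]: "0 < eps \<Longrightarrow> sedge eps f j eps = f (E2 0)"
  by (simp_all add: sedge_def)

lemma zero_set_eq:
  "zero_set m eps f =
     {E1 x | x. 0 < x \<and> x \<le> 1/2 \<and> f (E1 x) = 0}
     \<union> {E2 x | x. 0 \<le> x \<and> x < 1/2 \<and> f (E2 x) = 0}
     \<union> {Sm j y | j y. j < m \<and> 0 < y \<and> y < eps \<and> f (Sm j y) = 0}"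
  by (auto simp: zero_set_def gpoints_def less_eq_real_def)

lemma zero_set_mult:
  assumes "\<forall>p\<in>gpoints m eps. f p = c * g p" "c \<noteq> 0"
  shows "zero_set m eps f = zero_set m eps g"
  using assms unfolding zero_set_def by auto

definition bridge_fun :: "nat \<Rightarrow> real \<Rightarrow> real \<Rightarrow> real" where
  "bridge_fun m lam y = sinl lam (1/2) * cosl lam y + cosl lam (1/2) / m * sinl lam y"

definition bridge_deriv :: "nat \<Rightarrow> real \<Rightarrow> real \<Rightarrow> real" where
  "bridge_deriv m lam y = - sinl lam (1/2) * lam * sinl lam y + cosl lam (1/2) / m * cosl lam y"

(* Shooting from v1 with slope 1: the same solution bridge_fun on every small edge, with
   continuity and the Kirchhoff conditions at v2 and v3.  The Dirichlet condition at v4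
   is not imposed. *)
definition shooting_fun :: "nat \<Rightarrow> real \<Rightarrow> real \<Rightarrow> gpoint \<Rightarrow> real" where
  "shooting_fun m eps lam p = (case p of
      E1 x \<Rightarrow> sinl lam x
    | Sm j y \<Rightarrow> bridge_fun m lam y
    | E2 x \<Rightarrow> bridge_fun m lam eps * cosl lam x + m * bridge_deriv m lam eps * sinl lam x)"

lemma edge_eq_bridge: "edge_eq L lam (bridge_fun m lam) (bridge_deriv m lam)"
  unfolding bridge_fun_def[abs_def] bridge_deriv_def[abs_def] by (rule edge_eq_cosl_sinl)

lemma bridge_fun_0 [simp]: "bridge_fun m lam 0 = sinl lam (1/2)"
  and bridge_deriv_0 [simp]: "bridge_deriv m lam 0 = cosl lam (1/2) / m"
  by (simp_all add: bridge_fun_def bridge_deriv_def)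

lemma eigenfun_eq_mult_shooting_fun:
  assumes m: "m \<ge> 1" and eps: "0 < eps" and sinl_eps: "sinl lam eps \<noteq> 0"
    and f: "eigenfun m eps lam f"
  shows "\<exists>c. \<forall>p\<in>gpoints m eps. f p = c * shooting_fun m eps lam p"
proof -
  obtain d1 d2 ds where dir: "f (E1 0) = 0"
    and e1: "edge_eq (1/2) lam (edge1 f) d1" and e2: "edge_eq (1/2) lam (edge2 f) d2"
    and es: "\<And>j. j < m \<Longrightarrow> edge_eq eps lam (sedge eps f j) (ds j)"
    and kir2: "- d1 (1/2) + (\<Sum>j<m. ds j 0) = 0" and kir3: "(\<Sum>j<m. - ds j eps) + d2 0 = 0"
    using f unfolding eigenfun_def by blast
  define c where "c = d1 0"
  have on_e1: "f (E1 x) = c * sinl lam x" if "x \<in> {0..1/2}" for x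
    using edge_eq_solution(1)[OF e1 that] dir by (simp add: edge1_def c_def)
  have "d1 (1/2) = c * cosl lam (1/2)"
    using edge_eq_solution(2)[OF e1, of "1/2"] dir by (simp add: edge1_def c_def)
  moreover have same_slope: "ds j 0 = (f (E2 0) - c * sinl lam (1/2) * cosl lam eps) / sinl lam eps"
    if "j < m" for j
    using edge_eq_initial_slope[OF es[OF that] _ sinl_eps] eps on_e1[of "1/2"] by simp
  ultimately have "ds j 0 = c * cosl lam (1/2) / m" if "j < m" for j
    using kir2 same_slope[OF that] m by (simp add: field_simps)
  then have on_bridge: "sedge eps f j y = c * bridge_fun m lam y"
    "ds j y = c * bridge_deriv m lam y" if "j < m" "y \<in> {0..eps}" for j y
    using edge_eq_solution[OF es[OF that(1)] that(2)] that(1) on_e1[of "1/2"]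
    by (simp_all add: bridge_fun_def bridge_deriv_def algebra_simps)
  have "d2 0 = (\<Sum>j<m. ds j eps)"
    using kir3 by (simp add: sum_negf)
  also have "\<dots> = c * (m * bridge_deriv m lam eps)"
    using on_bridge(2) eps by simp
  finally have on_e2: "f (E2 x) = c * shooting_fun m eps lam (E2 x)" if "x \<in> {0..1/2}" for x
    using edge_eq_solution(1)[OF e2 that] on_bridge(1)[of 0 eps] m eps
    by (simp add: edge2_def shooting_fun_def algebra_simps)
  have "f p = c * shooting_fun m eps lam p" if "p \<in> gpoints m eps" for p
    using that
  proof (cases rule: gpoints_cases)
    case (3 j y)
    then show ?thesis
      using on_bridge(1)[of j y] sedge_eq[of y eps f j] by (simp add: shooting_fun_def)
  qed (simp_all add: on_e1 on_e2 shooting_fun_def)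
  then show ?thesis
    by blast
qed

lemma eigenfun_imp_shooting_fun:
  assumes "m \<ge> 1" "0 < eps" "sinl lam eps \<noteq> 0" and f: "eigenfun m eps lam f"
  shows "shooting_fun m eps lam (E2 (1/2)) = 0"
    and "\<exists>c. c \<noteq> 0 \<and> (\<forall>p\<in>gpoints m eps. f p = c * shooting_fun m eps lam p)"
proof -
  obtain c where c: "\<forall>p\<in>gpoints m eps. f p = c * shooting_fun m eps lam p"
    using eigenfun_eq_mult_shooting_fun[OF assms] by blast
  moreover have "c \<noteq> 0"
    using f c unfolding eigenfun_def by auto
  moreover have "E2 (1/2) \<in> gpoints m eps"
    unfolding gpoints_def by (auto intro!: exI[of _ "1/2"])
  ultimately show "shooting_fun m eps lam (E2 (1/2)) = 0"
    and "\<exists>c. c \<noteq> 0 \<and> (\<forall>p\<in>gpoints m eps. f p = c * shooting_fun m eps lam p)"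
    using f unfolding eigenfun_def by auto
qed

lemma eigenfun_shooting_fun:
  assumes m: "m \<ge> 1" and eps: "0 < eps" and dir: "shooting_fun m eps lam (E2 (1/2)) = 0"
  shows "eigenfun m eps lam (shooting_fun m eps lam)"
proof -
  let ?F = "shooting_fun m eps lam"
  (* Any x0 in (0, 1/2] with sqrt |lam| * x0 < pi is a point where ?F does not vanish. *)
  define r where "r = sqrt \<bar>lam\<bar>"
  define x0 where "x0 = 1 / (2 * r + 2)"
  have "0 \<le> r"
    by (simp add: r_def)
  then have x0: "0 < x0" "x0 \<le> 1/2" and "r * x0 < 1"
    by (simp_all add: x0_def divide_simps)
  then have "lam \<le> 0 \<or> sqrt lam * x0 < pi"
    using pi_gt3 by (auto simp: r_def)
  then have "?F (E1 x0) \<noteq> 0"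
    using sinl_pos[OF x0(1)] by (simp add: shooting_fun_def less_imp_neq[symmetric])
  then have nz: "\<exists>p\<in>gpoints m eps. ?F p \<noteq> 0"
    using x0 by (auto simp: gpoints_def)
  have e1: "edge_eq (1/2) lam (edge1 ?F) (cosl lam)"
    using edge_eq_cosl_sinl[of "1/2" lam 0 1] by (simp add: edge1_def[abs_def] shooting_fun_def)
  define d2 where
    "d2 x = - bridge_fun m lam eps * lam * sinl lam x
      + m * bridge_deriv m lam eps * cosl lam x" for x
  have e2: "edge_eq (1/2) lam (edge2 ?F) d2"
    unfolding edge2_def[abs_def] shooting_fun_def gpoint.case d2_def[abs_def]
    by (rule edge_eq_cosl_sinl)
  define ds where "ds j = bridge_deriv m lam" for j :: nat
  have "edge_eq eps lam (sedge eps ?F j) (ds j)" for j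
    unfolding ds_def
    by (rule edge_eq_cong[OF _ edge_eq_bridge]) (auto simp: sedge_def shooting_fun_def)
  then have es: "\<forall>j<m. edge_eq eps lam (sedge eps ?F j) (ds j)"
    by blast
  have kir2: "- cosl lam (1/2) + (\<Sum>j<m. ds j 0) = 0"
    using m by (simp add: ds_def)
  have kir3: "(\<Sum>j<m. - ds j eps) + d2 0 = 0"
    by (simp add: d2_def ds_def)
  have "?F (E1 0) = 0"
    by (simp add: shooting_fun_def)
  then show ?thesis
    unfolding eigenfun_def using nz dir e1 e2 es kir2 kir3 by blast
qed

lemma simple_eigenval_shooting_fun:
  assumes m: "m \<ge> 1" and eps: "0 < eps" and sinl_eps: "sinl lam eps \<noteq> 0"
    and dir: "shooting_fun m eps lam (E2 (1/2)) = 0"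
  shows "simple_eigenval m eps lam"
  unfolding simple_eigenval_def eigenval_def
proof (intro conjI allI impI)
  show "\<exists>f. eigenfun m eps lam f"
    using eigenfun_shooting_fun[OF m eps dir] by blast
  fix f g
  assume "eigenfun m eps lam f \<and> eigenfun m eps lam g"
  then obtain a b where "b \<noteq> 0"
    "\<forall>p\<in>gpoints m eps. f p = a * shooting_fun m eps lam p"
    "\<forall>p\<in>gpoints m eps. g p = b * shooting_fun m eps lam p"
    using eigenfun_imp_shooting_fun(2)[OF m eps sinl_eps] by metis
  then have "\<forall>p\<in>gpoints m eps. f p = a / b * g p"
    by simp
  then show "\<exists>c. \<forall>p\<in>gpoints m eps. f p = c * g p" ..
qed

lemma shooting_fun_dirichlet_pos:
  assumes "lam \<le> 0" "m \<ge> 1" "0 < eps"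
  shows "0 < shooting_fun m eps lam (E2 (1/2))"
proof -
  have s: "0 < sinl lam (1/2)" "0 < sinl lam eps" and c: "\<And>x. 0 < cosl lam x"
    using assms sinl_pos cosl_pos by auto
  have "0 \<le> - lam"
    using assms(1) by simp
  then have "0 \<le> sinl lam (1/2) * (- lam) * sinl lam eps"
    using s by (intro mult_nonneg_nonneg) auto
  moreover have "0 < cosl lam (1/2) / m * cosl lam eps" "0 < cosl lam (1/2) / m * sinl lam eps"
    using s c assms(2) by simp_all
  ultimately have "0 < bridge_fun m lam eps" "0 < bridge_deriv m lam eps"
    unfolding bridge_fun_def bridge_deriv_def using s c[of eps] by (simp_all add: add_nonneg_pos)
  then show ?thesis
    using s c[of "1/2"] assms(2) by (simp add: shooting_fun_def add_pos_pos)
qed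

lemma eigenval_pos:
  assumes "m \<ge> 1" "0 < eps" "eigenval m eps lam"
  shows "0 < lam"
proof (rule ccontr)
  assume "\<not> 0 < lam"
  then have "lam \<le> 0"
    by simp
  moreover obtain f where "eigenfun m eps lam f"
    using assms(3) unfolding eigenval_def by blast
  moreover have "sinl lam eps \<noteq> 0"
    using sinl_pos[OF assms(2)] \<open>lam \<le> 0\<close> by (simp add: less_imp_neq[symmetric])
  ultimately show False
    using eigenfun_imp_shooting_fun(1)[OF assms(1,2)] shooting_fun_dirichlet_pos[OF _ assms(1,2)]
    by (metis less_irrefl)
qed

lemma bridge_fun_reflect:
  assumes ends: "bridge_fun m lam eps = \<sigma> * bridge_fun m lam 0"
      "bridge_deriv m lam eps = - \<sigma> * bridge_deriv m lam 0"
    and y: "y \<in> {0..eps}"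
  shows "bridge_fun m lam (eps - y) = \<sigma> * bridge_fun m lam y"
proof -
  have reflected: "edge_eq eps lam
      (\<lambda>y. sinl lam (1/2) * cosl lam (eps - y) + cosl lam (1/2) / m * sinl lam (eps - y))
      (\<lambda>y. sinl lam (1/2) * lam * sinl lam (eps - y) - cosl lam (1/2) / m * cosl lam (eps - y))"
    by (rule edge_eq_cosl_sinl_reflect)
  have scaled:
    "edge_eq eps lam (\<lambda>y. \<sigma> * bridge_fun m lam y) (\<lambda>y. \<sigma> * bridge_deriv m lam y)"
    unfolding bridge_fun_def bridge_deriv_def
    using edge_eq_cosl_sinl[of eps lam "\<sigma> * sinl lam (1/2)" "\<sigma> * (cosl lam (1/2) / m)"]
    by (simp add: algebra_simps)
  show ?thesis
    using edge_eq_unique[OF reflected scaled _ _ y] ends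
    by (simp add: bridge_fun_def bridge_deriv_def algebra_simps)
qed

lemma shooting_fun_E2_reflect:
  assumes m: "m \<ge> 1"
    and ends: "bridge_fun m lam eps = \<sigma> * bridge_fun m lam 0"
      "bridge_deriv m lam eps = - \<sigma> * bridge_deriv m lam 0"
    and x: "x \<in> {0..1/2}"
  shows "shooting_fun m eps lam (E2 x) = \<sigma> * sinl lam (1/2 - x)"
proof -
  have on_e2: "edge_eq (1/2) lam (\<lambda>x. shooting_fun m eps lam (E2 x))
      (\<lambda>x. - bridge_fun m lam eps * lam * sinl lam x + m * bridge_deriv m lam eps * cosl lam x)"
    unfolding shooting_fun_def gpoint.case by (rule edge_eq_cosl_sinl)
  have reflected: "edge_eq (1/2) lam (\<lambda>x. 0 * cosl lam (1/2 - x) + \<sigma> * sinl lam (1/2 - x))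
      (\<lambda>x. 0 * lam * sinl lam (1/2 - x) - \<sigma> * cosl lam (1/2 - x))"
    by (rule edge_eq_cosl_sinl_reflect)
  show ?thesis
    using edge_eq_unique[OF on_e2 reflected _ _ x] ends m by (simp add: shooting_fun_def)
qed

lemma shooting_fun_reflect:
  assumes "m \<ge> 1" and \<sigma>: "\<sigma> \<in> {-1, 1}"
    and ends: "bridge_fun m lam eps = \<sigma> * bridge_fun m lam 0"
      "bridge_deriv m lam eps = - \<sigma> * bridge_deriv m lam 0"
    and p: "p \<in> gpoints m eps"
  shows "shooting_fun m eps lam (psi eps p) = \<sigma> * shooting_fun m eps lam p"
  using p
proof (cases rule: gpoints_cases)
  case (1 x)
  then show ?thesis
    using shooting_fun_E2_reflect[OF assms(1) ends, of "1/2 - x"] by (simp add: shooting_fun_def)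
next
  case (2 x)
  have "\<sigma> * \<sigma> = 1"
    using \<sigma> by auto
  then show ?thesis
    using 2 shooting_fun_E2_reflect[OF assms(1) ends, of x]
    by (simp add: shooting_fun_def mult.assoc[symmetric])
next
  case (3 j y)
  then show ?thesis
    using bridge_fun_reflect[OF ends, of y] by (simp add: shooting_fun_def)
qed

section \<open>The characteristic functions\<close>

definition sym_char :: "nat \<Rightarrow> real \<Rightarrow> real \<Rightarrow> real" where
  "sym_char m eps b = cos b * cos (eps * b) - m * sin b * sin (eps * b)"

definition antisym_char :: "nat \<Rightarrow> real \<Rightarrow> real \<Rightarrow> real" where
  "antisym_char m eps b = cos b * sin (eps * b) + m * sin b * cos (eps * b)"

lemma bridge_fun_square:
  assumes "0 < b"
  shows "bridge_fun m ((2*b)^2) y = (sin b * cos (2*b*y) + cos b / m * sin (2*b*y)) / (2*b)"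
proof -
  have "0 < 2 * b"
    using assms by simp
  then show ?thesis
    unfolding bridge_fun_def sinl_square[OF \<open>0 < 2 * b\<close>] cosl_square[OF \<open>0 < 2 * b\<close>]
    by (simp add: add_divide_distrib)
qed

lemma bridge_deriv_square:
  assumes "0 < b"
  shows "bridge_deriv m ((2*b)^2) y = - sin b * sin (2*b*y) + cos b / m * cos (2*b*y)"
proof -
  have "0 < 2 * b"
    using assms by simp
  then show ?thesis
    unfolding bridge_deriv_def sinl_square[OF \<open>0 < 2 * b\<close>] cosl_square[OF \<open>0 < 2 * b\<close>]
    by (simp add: power2_eq_square)
qed

lemma shooting_fun_dirichlet_factor:
  assumes "0 < b" "m \<ge> 1"
  shows "real m * b * shooting_fun m eps ((2*b)^2) (E2 (1/2))
    = sym_char m eps b * antisym_char m eps b"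
proof -
  define a where "a = eps * b"
  have "2 * b * eps = 2 * a"
    by (simp add: a_def)
  then have double: "sin (2 * b * eps) = 2 * sin a * cos a"
    "cos (2 * b * eps) = cos a ^ 2 - sin a ^ 2"
    by (simp_all only: sin_double cos_double)
  have "0 < 2 * b"
    using assms by simp
  then show ?thesis
    using assms
    unfolding shooting_fun_def gpoint.case bridge_fun_square[OF assms(1)]
      bridge_deriv_square[OF assms(1)] sinl_square[OF \<open>0 < 2 * b\<close>] cosl_square[OF \<open>0 < 2 * b\<close>]
      sym_char_def antisym_char_def a_def[symmetric] double
    by (simp add: field_simps power2_eq_square)
qed

lemma bridge_sym_closed_form:
  assumes "0 < b" "m \<ge> 1" "sym_char m eps b = 0" "cos (eps * b) \<noteq> 0"
  shows "bridge_fun m ((2*b)^2) y = sin b * cos (2*b*y - eps*b) / (2 * b * cos (eps*b))"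
    and "bridge_deriv m ((2*b)^2) y = - sin b * sin (2*b*y - eps*b) / cos (eps*b)"
proof -
  have root: "cos b / m * cos (eps * b) = sin b * sin (eps * b)"
    using assms(2,3) by (simp add: sym_char_def field_simps)
  have "(sin b * cos (2*b*y) + cos b / m * sin (2*b*y)) * cos (eps*b)
      = sin b * cos (2*b*y - eps*b)"
    unfolding cos_diff using root by algebra
  then show "bridge_fun m ((2*b)^2) y = sin b * cos (2*b*y - eps*b) / (2 * b * cos (eps*b))"
    using assms(1,4) unfolding bridge_fun_square[OF assms(1)] by (simp add: field_simps)
  have "(- sin b * sin (2*b*y) + cos b / m * cos (2*b*y)) * cos (eps*b)
      = - sin b * sin (2*b*y - eps*b)"
    unfolding sin_diff using root by algebra
  then show "bridge_deriv m ((2*b)^2) y = - sin b * sin (2*b*y - eps*b) / cos (eps*b)"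
    using assms(4) unfolding bridge_deriv_square[OF assms(1)] by (simp add: field_simps)
qed

lemma bridge_antisym_closed_form:
  assumes "0 < b" "m \<ge> 1" "antisym_char m eps b = 0" "sin (eps * b) \<noteq> 0"
  shows "bridge_fun m ((2*b)^2) y = sin b * sin (eps*b - 2*b*y) / (2 * b * sin (eps*b))"
    and "bridge_deriv m ((2*b)^2) y = - sin b * cos (2*b*y - eps*b) / sin (eps*b)"
proof -
  have root: "cos b / m * sin (eps * b) = - sin b * cos (eps * b)"
    using assms(2,3) by (simp add: antisym_char_def field_simps)
  have "(sin b * cos (2*b*y) + cos b / m * sin (2*b*y)) * sin (eps*b)
      = sin b * sin (eps*b - 2*b*y)"
    unfolding sin_diff using root by algebra
  then show "bridge_fun m ((2*b)^2) y = sin b * sin (eps*b - 2*b*y) / (2 * b * sin (eps*b))"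
    using assms(1,4) unfolding bridge_fun_square[OF assms(1)] by (simp add: field_simps)
  have "(- sin b * sin (2*b*y) + cos b / m * cos (2*b*y)) * sin (eps*b)
      = - sin b * cos (2*b*y - eps*b)"
    unfolding cos_diff using root by algebra
  then show "bridge_deriv m ((2*b)^2) y = - sin b * cos (2*b*y - eps*b) / sin (eps*b)"
    using assms(4) unfolding bridge_deriv_square[OF assms(1)] by (simp add: field_simps)
qed

lemma unique_root_strict_decreasing:
  fixes f :: "real \<Rightarrow> real"
  assumes "a < b" "continuous_on {a..b} f"
    and dec: "\<And>x y. a \<le> x \<Longrightarrow> x < y \<Longrightarrow> y \<le> b \<Longrightarrow> f y < f x"
    and "0 < f a" "f b < 0"
  obtains r where "a < r" "r < b" "f r = 0" "\<And>x. a \<le> x \<Longrightarrow> x \<le> b \<Longrightarrow> f x = 0 \<Longrightarrow> x = r"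
proof -
  obtain r where r: "a \<le> r" "r \<le> b" "f r = 0"
    using IVT2'[of f b 0 a] assms by auto
  moreover have "x = r" if "a \<le> x" "x \<le> b" "f x = 0" for x
    using dec[of x r] dec[of r x] that r by (cases x r rule: linorder_cases) auto
  ultimately show ?thesis
    using that assms(4,5) by (metis less_eq_real_def less_irrefl)
qed

lemma cos_mult_cos_less:
  fixes t t' u u' :: real
  assumes "0 \<le> t" "t < t'" "t' \<le> pi/2" "0 \<le> u" "u < u'" "u' \<le> pi/2"
  shows "cos t' * cos u' < cos t * cos u"
proof -
  have "cos t' * cos u' \<le> cos t' * cos u"
    using assms by (intro mult_left_mono) (auto intro!: cos_ge_zero simp: cos_mono_le_eq)
  also have "\<dots> < cos t * cos u"
    using assms
    by (intro mult_strict_right_mono) (auto intro!: cos_gt_zero_pi simp: cos_mono_less_eq)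
  finally show ?thesis .
qed

lemma sin_mult_sin_less:
  fixes t t' u u' :: real
  assumes "0 \<le> t" "t < t'" "t' \<le> pi/2" "0 \<le> u" "u < u'" "u' \<le> pi/2"
  shows "sin t * sin u < sin t' * sin u'"
proof -
  have "sin t * sin u \<le> sin t * sin u'"
    using assms by (intro mult_left_mono) (auto intro!: sin_ge_zero simp: sin_mono_le_eq)
  also have "\<dots> < sin t' * sin u'"
    using assms
    by (intro mult_strict_right_mono) (auto intro!: sin_gt_zero simp: sin_mono_less_eq)
  finally show ?thesis .
qed

lemma sin_eq_0_iff_eq_pi: "0 < t \<Longrightarrow> t < 2*pi \<Longrightarrow> sin t = 0 \<longleftrightarrow> t = pi"
  using sin_eq_0_pi[of "t - pi"] by (auto simp: sin_diff)

lemma continuous_on_sym_char: "continuous_on S (sym_char m eps)"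
  unfolding sym_char_def[abs_def] by (intro continuous_intros)

lemma continuous_on_antisym_char: "continuous_on S (antisym_char m eps)"
  unfolding antisym_char_def[abs_def] by (intro continuous_intros)

section \<open>Roots of the characteristic functions for eps <= 1/4\<close>

context
  fixes m :: nat and eps :: real
  assumes m: "m \<ge> 1" and eps: "0 < eps" "eps \<le> 1/4"
begin

lemma eps_mult_bounds:
  assumes "0 < b" "b \<le> 3*pi/2"
  shows "0 < eps * b" "eps * b \<le> 3*pi/8"
  using mult_mono[of eps "1/4" b "3*pi/2"] eps assms by simp_all

lemma sin_cos_eps_mult_pos:
  assumes "0 < b" "b \<le> 3*pi/2"
  shows "0 < sin (eps * b)" "0 < cos (eps * b)"
  using eps_mult_bounds[OF assms] pi_gt3 by (auto intro!: sin_gt_zero cos_gt_zero_pi)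

lemma sym_char_decreasing:
  assumes "0 \<le> x" "x < y" "y \<le> pi/2"
  shows "sym_char m eps y < sym_char m eps x"
proof -
  have u: "0 \<le> eps * x" "eps * x < eps * y" "eps * y \<le> pi/2"
    using eps_mult_bounds[of y] assms eps pi_gt3 by auto
  have "cos y * cos (eps * y) < cos x * cos (eps * x)"
    using assms u by (intro cos_mult_cos_less) auto
  moreover have "m * (sin x * sin (eps * x)) < m * (sin y * sin (eps * y))"
    using assms u m by (simp add: sin_mult_sin_less)
  ultimately show ?thesis
    by (simp add: sym_char_def mult.assoc)
qed

lemma sym_char_increasing:
  assumes "pi \<le> x" "x < y" "y \<le> 3*pi/2"
  shows "sym_char m eps x < sym_char m eps y"
proof -
  have u: "0 \<le> eps * x" "eps * x < eps * y" "eps * y \<le> pi/2"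
    using eps_mult_bounds[of y] assms eps pi_gt3 by auto
  have "cos (y - pi) * cos (eps * y) < cos (x - pi) * cos (eps * x)"
    using assms u by (intro cos_mult_cos_less) auto
  moreover have "sin (x - pi) * sin (eps * x) < sin (y - pi) * sin (eps * y)"
    using assms u by (intro sin_mult_sin_less) auto
  ultimately have "cos x * cos (eps * x) < cos y * cos (eps * y)"
    "m * (sin y * sin (eps * y)) < m * (sin x * sin (eps * x))"
    using m by (simp_all add: cos_diff sin_diff)
  then show ?thesis
    by (simp add: sym_char_def mult.assoc)
qed

lemma antisym_char_decreasing:
  assumes "pi/2 \<le> x" "x < y" "y \<le> pi"
  shows "antisym_char m eps y < antisym_char m eps x"
proof -
  have u: "0 \<le> eps * x" "eps * x < eps * y" "eps * y \<le> pi/2"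
    using eps_mult_bounds[of y] assms eps pi_gt3 by auto
  have "cos (y - pi/2) * cos (eps * y) < cos (x - pi/2) * cos (eps * x)"
    using assms u by (intro cos_mult_cos_less) auto
  moreover have "sin (x - pi/2) * sin (eps * x) < sin (y - pi/2) * sin (eps * y)"
    using assms u by (intro sin_mult_sin_less) auto
  ultimately have "m * (sin y * cos (eps * y)) < m * (sin x * cos (eps * x))"
    "cos y * sin (eps * y) < cos x * sin (eps * x)"
    using m by (simp_all add: cos_diff sin_diff)
  then show ?thesis
    by (simp add: antisym_char_def mult.assoc)
qed

lemma antisym_char_pos:
  assumes "0 < b" "b \<le> pi/2"
  shows "0 < antisym_char m eps b"
proof -
  have b: "b \<le> 3*pi/2" "0 \<le> sin b"
    using assms pi_gt3 by (auto intro!: sin_ge_zero)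
  have "0 < sin (b + eps * b)"
    using assms eps_mult_bounds[OF assms(1) b(1)] pi_gt3 by (intro sin_gt_zero) auto
  also have "\<dots> \<le> antisym_char m eps b"
    using mult_right_mono[of 1 "real m" "sin b * cos (eps * b)"] b m
      sin_cos_eps_mult_pos[OF assms(1) b(1)]
    by (simp add: antisym_char_def sin_add mult.assoc)
  finally show ?thesis .
qed

lemma sym_char_neg:
  assumes "pi/2 \<le> b" "b \<le> pi"
  shows "sym_char m eps b < 0"
proof -
  have b: "0 < b" "b \<le> 3*pi/2" "0 \<le> sin b"
    using assms pi_gt3 by (auto intro!: sin_ge_zero)
  have "sym_char m eps b \<le> cos (b + eps * b)"
    using mult_right_mono[of 1 "real m" "sin b * sin (eps * b)"] b m
      sin_cos_eps_mult_pos[OF b(1,2)]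
    by (simp add: sym_char_def cos_add mult.assoc)
  also have "\<dots> < 0"
    using assms eps_mult_bounds[OF b(1,2)] pi_gt3 by (intro cos_lt_zero_pi) auto
  finally show ?thesis .
qed

lemma antisym_char_neg:
  assumes "pi \<le> b" "b \<le> 3*pi/2"
  shows "antisym_char m eps b < 0"
proof -
  have b: "0 < b" "sin b \<le> 0"
    using assms pi_gt3 by (auto intro!: sin_le_zero)
  have "antisym_char m eps b \<le> sin (b + eps * b)"
    using mult_right_mono_neg[of 1 "real m" "sin b * cos (eps * b)"] b m
      sin_cos_eps_mult_pos[OF b(1) assms(2)]
    by (simp add: antisym_char_def sin_add mult.assoc mult_nonpos_nonneg)
  also have "\<dots> < 0"
    using assms eps_mult_bounds[OF b(1) assms(2)] pi_gt3 by (intro sin_lt_zero) auto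
  finally show ?thesis .
qed

lemma sym_char_first_root:
  obtains b1 where "0 < b1" "b1 < pi/2" "sym_char m eps b1 = 0"
    and "\<And>x. 0 \<le> x \<Longrightarrow> x \<le> pi/2 \<Longrightarrow> sym_char m eps x = 0 \<Longrightarrow> x = b1"
proof (rule unique_root_strict_decreasing[of 0 "pi/2" "sym_char m eps"])
  show "0 < sym_char m eps 0" "sym_char m eps (pi/2) < 0"
    using sym_char_neg[of "pi/2"] pi_gt3 by (simp_all add: sym_char_def)
qed (use that continuous_on_sym_char sym_char_decreasing in auto)

lemma antisym_char_first_root:
  obtains b2 where "pi/2 < b2" "b2 < pi" "antisym_char m eps b2 = 0"
    and "\<And>x. pi/2 \<le> x \<Longrightarrow> x \<le> pi \<Longrightarrow> antisym_char m eps x = 0 \<Longrightarrow> x = b2"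
proof (rule unique_root_strict_decreasing[of "pi/2" pi "antisym_char m eps"])
  show "0 < antisym_char m eps (pi/2)" "antisym_char m eps pi < 0"
    using antisym_char_pos[of "pi/2"] antisym_char_neg[of pi] pi_gt3 by simp_all
qed (use that continuous_on_antisym_char antisym_char_decreasing in auto)

lemma sym_char_second_root:
  obtains b3 where "pi < b3" "b3 < 3*pi/2" "sym_char m eps b3 = 0"
    and "\<And>x. pi \<le> x \<Longrightarrow> x \<le> 3*pi/2 \<Longrightarrow> sym_char m eps x = 0 \<Longrightarrow> x = b3"
proof (rule unique_root_strict_decreasing[of pi "3*pi/2" "\<lambda>b. - sym_char m eps b"])
  have "sin (3*pi/2) = -1" "cos (3*pi/2) = 0"
    using sin_add[of pi "pi/2"] cos_add[of pi "pi/2"] by (simp_all add: field_simps)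
  then show "0 < - sym_char m eps pi" "- sym_char m eps (3*pi/2) < 0"
    using sym_char_neg[of pi] sin_cos_eps_mult_pos[of "3*pi/2"] m pi_gt3
    by (simp_all add: sym_char_def)
  show "continuous_on {pi..3*pi/2} (\<lambda>b. - sym_char m eps b)"
    using continuous_on_sym_char by (intro continuous_intros)
qed (use that sym_char_increasing pi_gt3 in auto)

lemma char_roots:
  obtains b1 b2 b3 where "0 < b1" "b1 < pi/2" "sym_char m eps b1 = 0"
    and "pi/2 < b2" "b2 < pi" "antisym_char m eps b2 = 0"
    and "pi < b3" "b3 < 3*pi/2" "sym_char m eps b3 = 0"
    and "\<And>b. 0 < b \<Longrightarrow> b \<le> 3*pi/2 \<Longrightarrow> sym_char m eps b * antisym_char m eps b = 0
      \<Longrightarrow> b = b1 \<or> b = b2 \<or> b = b3"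
proof -
  obtain b1 where b1: "0 < b1" "b1 < pi/2" "sym_char m eps b1 = 0"
    and uniq1: "\<And>x. 0 \<le> x \<Longrightarrow> x \<le> pi/2 \<Longrightarrow> sym_char m eps x = 0 \<Longrightarrow> x = b1"
    by (fact sym_char_first_root)
  obtain b2 where b2: "pi/2 < b2" "b2 < pi" "antisym_char m eps b2 = 0"
    and uniq2: "\<And>x. pi/2 \<le> x \<Longrightarrow> x \<le> pi \<Longrightarrow> antisym_char m eps x = 0 \<Longrightarrow> x = b2"
    by (fact antisym_char_first_root)
  obtain b3 where b3: "pi < b3" "b3 < 3*pi/2" "sym_char m eps b3 = 0"
    and uniq3: "\<And>x. pi \<le> x \<Longrightarrow> x \<le> 3*pi/2 \<Longrightarrow> sym_char m eps x = 0 \<Longrightarrow> x = b3"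
    by (fact sym_char_second_root)
  show ?thesis
  proof (rule that[OF b1 b2 b3])
    fix b
    assume b: "0 < b" "b \<le> 3*pi/2" and root: "sym_char m eps b * antisym_char m eps b = 0"
    consider "b \<le> pi/2" | "pi/2 < b" "b \<le> pi" | "pi < b"
      by linarith
    then show "b = b1 \<or> b = b2 \<or> b = b3"
    proof cases
      case 1
      then show ?thesis
        using uniq1 root antisym_char_pos[of b] b by auto
    next
      case 2
      then show ?thesis
        using uniq2 root sym_char_neg[of b] by auto
    next
      case 3
      then show ?thesis
        using uniq3 root antisym_char_neg[of b] b by auto
    qed
  qed
qed

lemma sinl_eps_nonzero:
  assumes "0 < b" "b \<le> 3*pi/2"
  shows "sinl ((2*b)^2) eps \<noteq> 0"
proof -
  have "0 < sin (2 * (eps * b))"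
    using eps_mult_bounds[OF assms] pi_gt3 by (intro sin_gt_zero) auto
  moreover have "0 < 2 * b"
    using assms by simp
  ultimately show ?thesis
    unfolding sinl_square[OF \<open>0 < 2 * b\<close>] by (simp add: mult_ac)
qed

lemma simple_eigenval_char_root:
  assumes "0 < b" "b \<le> 3*pi/2" "sym_char m eps b * antisym_char m eps b = 0"
  shows "simple_eigenval m eps ((2*b)^2)"
proof (rule simple_eigenval_shooting_fun[OF m eps(1) sinl_eps_nonzero[OF assms(1,2)]])
  show "shooting_fun m eps ((2*b)^2) (E2 (1/2)) = 0"
    using shooting_fun_dirichlet_factor[OF assms(1) m, of eps] assms m by simp
qed

lemma eigenval_imp_char_root:
  assumes "0 < b" "b \<le> 3*pi/2" "eigenval m eps ((2*b)^2)"
  shows "sym_char m eps b * antisym_char m eps b = 0"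
proof -
  obtain f where "eigenfun m eps ((2*b)^2) f"
    using assms(3) unfolding eigenval_def by blast
  then have "shooting_fun m eps ((2*b)^2) (E2 (1/2)) = 0"
    by (rule eigenfun_imp_shooting_fun(1)[OF m eps(1) sinl_eps_nonzero[OF assms(1,2)]])
  then show ?thesis
    using shooting_fun_dirichlet_factor[OF assms(1) m, of eps] by simp
qed

lemma eigenval_le_char_root:
  assumes "eigenval m eps mu" "mu \<le> (3*pi)^2"
  obtains b where "0 < b" "b \<le> 3*pi/2" "mu = (2*b)^2" "sym_char m eps b * antisym_char m eps b = 0"
proof -
  define b where "b = sqrt mu / 2"
  have "0 < mu"
    using eigenval_pos[OF m eps(1) assms(1)] .
  then have mu: "mu = (2*b)^2" "0 < b"
    by (simp_all add: b_def)
  have "2 * b \<le> 3 * pi"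
    using assms(2) unfolding mu(1) by (rule power2_le_imp_le) simp
  moreover have "sym_char m eps b * antisym_char m eps b = 0"
    using \<open>2 * b \<le> 3 * pi\<close> mu(2) assms(1) unfolding mu(1) by (intro eigenval_imp_char_root) auto
  ultimately show ?thesis
    using that mu by simp
qed

lemma shooting_fun_antisym_root:
  assumes b: "0 < b" "b \<le> 3*pi/2" and root: "antisym_char m eps b = 0"
  shows "\<And>p. p \<in> gpoints m eps \<Longrightarrow>
      shooting_fun m eps ((2*b)^2) (psi eps p) = - shooting_fun m eps ((2*b)^2) p"
    and "\<And>x. x \<in> {0..1/2} \<Longrightarrow>
      shooting_fun m eps ((2*b)^2) (E2 x) = - (sin (2*b*(1/2 - x)) / (2*b))"
proof -
  have "sin (eps * b) \<noteq> 0"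
    using sin_cos_eps_mult_pos[OF b] by simp
  note closed = bridge_antisym_closed_form[OF b(1) m root this]
  have ends: "bridge_fun m ((2*b)^2) eps = - 1 * bridge_fun m ((2*b)^2) 0"
    "bridge_deriv m ((2*b)^2) eps = - (- 1) * bridge_deriv m ((2*b)^2) 0"
    unfolding closed by (simp_all add: algebra_simps sin_minus[of "eps * b", symmetric])
  show "shooting_fun m eps ((2*b)^2) (psi eps p) = - shooting_fun m eps ((2*b)^2) p"
    if "p \<in> gpoints m eps" for p
    using shooting_fun_reflect[OF m _ ends that] by simp
  show "shooting_fun m eps ((2*b)^2) (E2 x) = - (sin (2*b*(1/2 - x)) / (2*b))"
    if "x \<in> {0..1/2}" for x
  proof -
    have "0 < 2 * b"
      using b by simp
    have "shooting_fun m eps ((2*b)^2) (E2 x) = - 1 * sinl ((2*b)^2) (1/2 - x)"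
      by (rule shooting_fun_E2_reflect[OF m ends that])
    then show ?thesis
      unfolding sinl_square[OF \<open>0 < 2 * b\<close>] by simp
  qed
qed

lemma shooting_fun_sym_root:
  assumes b: "0 < b" "b \<le> 3*pi/2" and root: "sym_char m eps b = 0"
  shows "\<And>p. p \<in> gpoints m eps \<Longrightarrow>
      shooting_fun m eps ((2*b)^2) (psi eps p) = shooting_fun m eps ((2*b)^2) p"
    and "\<And>x. x \<in> {0..1/2} \<Longrightarrow>
      shooting_fun m eps ((2*b)^2) (E2 x) = sin (2*b*(1/2 - x)) / (2*b)"
proof -
  have "cos (eps * b) \<noteq> 0"
    using sin_cos_eps_mult_pos[OF b] by simp
  note closed = bridge_sym_closed_form[OF b(1) m root this]
  have ends: "bridge_fun m ((2*b)^2) eps = 1 * bridge_fun m ((2*b)^2) 0"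
    "bridge_deriv m ((2*b)^2) eps = - 1 * bridge_deriv m ((2*b)^2) 0"
    unfolding closed by (simp_all add: algebra_simps cos_minus[of "eps * b", symmetric])
  show "shooting_fun m eps ((2*b)^2) (psi eps p) = shooting_fun m eps ((2*b)^2) p"
    if "p \<in> gpoints m eps" for p
    using shooting_fun_reflect[OF m _ ends that] by simp
  show "shooting_fun m eps ((2*b)^2) (E2 x) = sin (2*b*(1/2 - x)) / (2*b)"
    if "x \<in> {0..1/2}" for x
  proof -
    have "0 < 2 * b"
      using b by simp
    have "shooting_fun m eps ((2*b)^2) (E2 x) = 1 * sinl ((2*b)^2) (1/2 - x)"
      by (rule shooting_fun_E2_reflect[OF m ends that])
    then show ?thesis
      unfolding sinl_square[OF \<open>0 < 2 * b\<close>] by simp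
  qed
qed

lemma bridge_fun_antisym_root_eq_0_iff:
  assumes b: "pi/2 < b" "b < pi" and root: "antisym_char m eps b = 0" and y: "0 < y" "y < eps"
  shows "bridge_fun m ((2*b)^2) y = 0 \<longleftrightarrow> y = eps/2"
proof -
  have b': "0 < b" "b \<le> 3*pi/2"
    using b by auto
  have a: "0 < eps * b" "eps * b \<le> 3*pi/8" "0 < sin (eps * b)"
    using eps_mult_bounds[OF b'] sin_cos_eps_mult_pos[OF b'] by auto
  have "0 < 2 * b * y" "2 * b * y < 2 * (eps * b)"
    using y b' mult_strict_left_mono[of y eps "2 * b"] by (auto simp: mult_ac)
  then have "- pi < eps * b - 2 * b * y" "eps * b - 2 * b * y < pi"
    using a pi_gt3 by linarith+
  then have "sin (eps * b - 2 * b * y) = 0 \<longleftrightarrow> eps * b - 2 * b * y = 0"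
    using sin_eq_0_pi[of "eps * b - 2 * b * y"] by auto
  moreover have "0 < sin b"
    using b by (intro sin_gt_zero) auto
  ultimately have "bridge_fun m ((2*b)^2) y = 0 \<longleftrightarrow> eps * b - 2 * b * y = 0"
    using bridge_antisym_closed_form(1)[OF b'(1) m root] a b' by simp
  then show ?thesis
    using b' by (auto simp: field_simps)
qed

lemma bridge_fun_sym_root_nonzero:
  assumes b: "pi < b" "b < 3*pi/2" and root: "sym_char m eps b = 0" and y: "0 < y" "y < eps"
  shows "bridge_fun m ((2*b)^2) y \<noteq> 0"
proof -
  have b': "0 < b" "b \<le> 3*pi/2"
    using b pi_gt_zero by linarith+
  have a: "0 < eps * b" "eps * b \<le> 3*pi/8" "0 < cos (eps * b)"
    using eps_mult_bounds[OF b'] sin_cos_eps_mult_pos[OF b'] by auto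
  have "0 < 2 * b * y" "2 * b * y < 2 * (eps * b)"
    using y b' mult_strict_left_mono[of y eps "2 * b"] by (auto simp: mult_ac)
  then have "0 < cos (2 * b * y - eps * b)"
    using a pi_gt3 by (intro cos_gt_zero_pi) linarith+
  moreover have "sin b < 0"
    using b by (intro sin_lt_zero) auto
  ultimately show ?thesis
    using bridge_sym_closed_form(1)[OF b'(1) m root] a b' by simp
qed

lemma zero_set_shooting_fun_antisym:
  assumes b: "pi/2 < b" "b < pi" and root: "antisym_char m eps b = 0"
  shows "zero_set m eps (shooting_fun m eps ((2*b)^2)) = (\<lambda>j. Sm j (eps/2)) ` {..<m}"
proof -
  let ?F = "shooting_fun m eps ((2*b)^2)"
  have b': "0 < b" "b \<le> 3*pi/2" "0 < 2 * b"
    using b by auto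
  have sin_pos: "0 < sin (2 * b * x)" if "0 < x" "x \<le> 1/2" for x
  proof (rule sin_gt_zero)
    have "2 * b * x \<le> b"
      using mult_left_mono[of x "1/2" "2 * b"] that b' by simp
    then show "2 * b * x < pi"
      using b by linarith
  qed (use that b' in simp)
  have E1: "?F (E1 x) \<noteq> 0" if "0 < x" "x \<le> 1/2" for x
    using sin_pos[OF that] b' unfolding shooting_fun_def gpoint.case sinl_square[OF b'(3)] by simp
  have E2: "?F (E2 x) \<noteq> 0" if "0 \<le> x" "x < 1/2" for x
    using sin_pos[of "1/2 - x"] shooting_fun_antisym_root(2)[OF b'(1,2) root, of x] that b'
    by simp
  have Sm: "?F (Sm j y) = 0 \<longleftrightarrow> y = eps/2" if "0 < y" "y < eps" for j y
    using bridge_fun_antisym_root_eq_0_iff[OF b root that] by (simp add: shooting_fun_def)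
  have no_E: "{E1 x | x. 0 < x \<and> x \<le> 1/2 \<and> ?F (E1 x) = 0} = {}"
    "{E2 x | x. 0 \<le> x \<and> x < 1/2 \<and> ?F (E2 x) = 0} = {}"
    using E1 E2 by auto
  have Sm_zeros: "{Sm j y | j y. j < m \<and> 0 < y \<and> y < eps \<and> ?F (Sm j y) = 0}
      = (\<lambda>j. Sm j (eps/2)) ` {..<m}"
    using Sm eps(1) by (auto simp: image_def intro!: exI[of _ "eps/2"])
  show ?thesis
    unfolding zero_set_eq no_E Sm_zeros by simp
qed

lemma zero_set_shooting_fun_sym:
  assumes b: "pi < b" "b < 3*pi/2" and root: "sym_char m eps b = 0"
  shows "zero_set m eps (shooting_fun m eps ((2*b)^2)) = {E1 (pi/(2*b)), E2 (1/2 - pi/(2*b))}"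
proof -
  let ?F = "shooting_fun m eps ((2*b)^2)"
  have b': "0 < b" "b \<le> 3*pi/2" "0 < 2 * b"
    using b pi_gt_zero by linarith+
  have sin_zero: "sin (2 * b * x) = 0 \<longleftrightarrow> x = pi / (2 * b)" if "0 < x" "x \<le> 1/2" for x
  proof -
    have "2 * b * x \<le> b"
      using mult_left_mono[of x "1/2" "2 * b"] that b' by simp
    then have "2 * b * x < 2 * pi"
      using b by linarith
    then have "sin (2 * b * x) = 0 \<longleftrightarrow> 2 * b * x = pi"
      using that b' by (intro sin_eq_0_iff_eq_pi) auto
    then show ?thesis
      using b' by (auto simp: field_simps)
  qed
  have E1: "?F (E1 x) = 0 \<longleftrightarrow> x = pi / (2 * b)" if "0 < x" "x \<le> 1/2" for x
    using sin_zero[OF that] b' unfolding shooting_fun_def gpoint.case sinl_square[OF b'(3)] by simp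
  have E2: "?F (E2 x) = 0 \<longleftrightarrow> x = 1/2 - pi / (2 * b)" if "0 \<le> x" "x < 1/2" for x
    using sin_zero[of "1/2 - x"] shooting_fun_sym_root(2)[OF b'(1,2) root, of x] that b'
    by auto
  have Sm: "?F (Sm j y) \<noteq> 0" if "0 < y" "y < eps" for j y
    using bridge_fun_sym_root_nonzero[OF b root that] by (simp add: shooting_fun_def)
  have "0 < pi / (2 * b)" "pi / (2 * b) < 1/2"
    using b' b by (auto simp: field_simps)
  then have E_zeros: "{E1 x | x. 0 < x \<and> x \<le> 1/2 \<and> ?F (E1 x) = 0} = {E1 (pi / (2 * b))}"
    "{E2 x | x. 0 \<le> x \<and> x < 1/2 \<and> ?F (E2 x) = 0} = {E2 (1/2 - pi / (2 * b))}"
    using E1 E2 by auto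
  have no_Sm: "{Sm j y | j y. j < m \<and> 0 < y \<and> y < eps \<and> ?F (Sm j y) = 0} = {}"
    using Sm by auto
  show ?thesis
    unfolding zero_set_eq E_zeros no_Sm by auto
qed

lemma eigenfun_antisym_root:
  assumes b: "pi/2 < b" "b < pi" and root: "antisym_char m eps b = 0"
    and f: "eigenfun m eps ((2*b)^2) f"
  shows "(\<forall>p\<in>gpoints m eps. f (psi eps p) = - f p) \<and>
    finite (zero_set m eps f) \<and> card (zero_set m eps f) = m"
proof -
  have b': "0 < b" "b \<le> 3*pi/2"
    using b by auto
  obtain c where c: "c \<noteq> 0" "\<forall>p\<in>gpoints m eps. f p = c * shooting_fun m eps ((2*b)^2) p"
    using eigenfun_imp_shooting_fun(2)[OF m eps(1) sinl_eps_nonzero[OF b'] f] by blast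
  have "f (psi eps p) = - f p" if "p \<in> gpoints m eps" for p
    using c(2) psi_gpoints[OF that] shooting_fun_antisym_root(1)[OF b' root that] that by simp
  moreover have "zero_set m eps f = (\<lambda>j. Sm j (eps/2)) ` {..<m}"
    using zero_set_mult[OF c(2,1)] zero_set_shooting_fun_antisym[OF b root] by simp
  moreover have "inj_on (\<lambda>j. Sm j (eps/2)) {..<m}"
    by (rule inj_onI) simp
  ultimately show ?thesis
    by (simp add: card_image)
qed

lemma eigenfun_sym_root:
  assumes b: "pi < b" "b < 3*pi/2" and root: "sym_char m eps b = 0"
    and f: "eigenfun m eps ((2*b)^2) f"
  shows "(\<forall>p\<in>gpoints m eps. f (psi eps p) = f p) \<and>
    finite (zero_set m eps f) \<and> card (zero_set m eps f) = 2"
proof -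
  have b': "0 < b" "b \<le> 3*pi/2"
    using b pi_gt_zero by linarith+
  obtain c where c: "c \<noteq> 0" "\<forall>p\<in>gpoints m eps. f p = c * shooting_fun m eps ((2*b)^2) p"
    using eigenfun_imp_shooting_fun(2)[OF m eps(1) sinl_eps_nonzero[OF b'] f] by blast
  have "f (psi eps p) = f p" if "p \<in> gpoints m eps" for p
    using c(2) psi_gpoints[OF that] shooting_fun_sym_root(1)[OF b' root that] that by simp
  moreover have "zero_set m eps f = {E1 (pi/(2*b)), E2 (1/2 - pi/(2*b))}"
    using zero_set_mult[OF c(2,1)] zero_set_shooting_fun_sym[OF b root] by simp
  ultimately show ?thesis
    by simp
qed

end

theorem lemma18:
  fixes m :: nat
  assumes "m \<ge> 1"
  shows "\<exists>eps>0. \<exists>l1 l2 l3. l1 < l2 \<and> l2 < l3 \<and>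
     simple_eigenval m eps l1 \<and> simple_eigenval m eps l2 \<and> simple_eigenval m eps l3 \<and>
     (\<forall>mu. eigenval m eps mu \<longrightarrow> mu = l1 \<or> mu = l2 \<or> mu = l3 \<or> mu > l3) \<and>
     (\<forall>f. eigenfun m eps l2 f \<longrightarrow>
        (\<forall>p\<in>gpoints m eps. f (psi eps p) = - f p) \<and>
        finite (zero_set m eps f) \<and> card (zero_set m eps f) = m) \<and>
     (\<forall>f. eigenfun m eps l3 f \<longrightarrow>
        (\<forall>p\<in>gpoints m eps. f (psi eps p) = f p) \<and>
        finite (zero_set m eps f) \<and> card (zero_set m eps f) = 2)"
proof -
  define eps :: real where "eps = 1/4"
  have eps: "0 < eps" "eps \<le> 1/4"
    by (simp_all add: eps_def)
  obtain b1 b2 b3 where b1: "0 < b1" "b1 < pi/2" "sym_char m eps b1 = 0"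
    and b2: "pi/2 < b2" "b2 < pi" "antisym_char m eps b2 = 0"
    and b3: "pi < b3" "b3 < 3*pi/2" "sym_char m eps b3 = 0"
    and roots: "\<And>b. 0 < b \<Longrightarrow> b \<le> 3*pi/2 \<Longrightarrow> sym_char m eps b * antisym_char m eps b = 0
      \<Longrightarrow> b = b1 \<or> b = b2 \<or> b = b3"
    by (fact char_roots[OF assms eps])
  have simple: "simple_eigenval m eps ((2*b)^2)" if "b \<in> {b1, b2, b3}" for b
    using that b1 b2 b3 by (intro simple_eigenval_char_root[OF assms eps]) auto
  have order: "(2*b1)^2 < (2*b2)^2" "(2*b2)^2 < (2*b3)^2"
    using b1 b2 b3 by (simp_all add: power_strict_mono)
  have "(2*b3)^2 \<le> (3*pi)^2"
    using b3 by (intro power_mono) auto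
  then have classify: "mu = (2*b1)^2 \<or> mu = (2*b2)^2 \<or> mu = (2*b3)^2 \<or> mu > (2*b3)^2"
    if "eigenval m eps mu" for mu
    using eigenval_le_char_root[OF assms eps that] roots by (metis not_le order_trans)
  show ?thesis
    by (rule exI[of _ eps], rule conjI[OF eps(1)], rule exI[of _ "(2*b1)^2"],
        rule exI[of _ "(2*b2)^2"], rule exI[of _ "(2*b3)^2"])
      (use simple order classify eigenfun_antisym_root[OF assms eps b2]
        eigenfun_sym_root[OF assms eps b3] in blast)
qed

end
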